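(* Let $f:\mathbb{R}^n\to\mathbb{R}^n$ be of class $C^1$ with $\det f'(x)\neq0$ for all $x\in\mathbb{R}^n$. Then $f$ is one-to-one if there exist points $x_0,x_1\in\mathbb{R}^n$ and nonnegative real numbers $a,b,c$ such that $$(x-x_1)\cdot F(x)\le a+b|x-x_1|^2+c|f(x)-f(x_0)|^2\qquad\forall x\in\mathbb{R}^n,$$ where $F(x):=-f'(x)^{-1}(f(x)-f(x_0))$.
   Context: $\cdot$ is the Euclidean inner product and $|\cdot|$ the Euclidean norm on $\mathbb{R}^n$. *)

theory Defs
  imports "HOL-Analysis.Analysis"
begin

end

theory Submission
  imports Defs
begin

text \<open>
  Since \<open>det f' \<noteq> 0\<close>, \<open>f\<close> is a local homeomorphism. For a point \<open>x\<close>, lift the segment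
  \<open>s \<mapsto> f x0 + s (f x - f x0)\<close> through \<open>f\<close>, starting at \<open>x\<close> for \<open>s = 1\<close> and running
  towards \<open>s = 0\<close>. A lift \<open>g\<close> satisfies \<open>g' = -F(g) / s\<close>, so the growth hypothesis
  yields a Gronwall bound on \<open>|g s - x1|\<^sup>2\<close> on every interval \<open>[t, 1]\<close> with \<open>t > 0\<close>;
  by compactness the lift never escapes, so it exists on all of \<open>(0, 1]\<close>, is unique, and
  depends continuously on \<open>x\<close>. The points whose lift enters the neighbourhood of \<open>x0\<close>
  where \<open>f\<close> has a local inverse \<open>h\<close> form a nonempty open and closed set, hence everything.
  Points with equal images share the segment, so near \<open>s = 0\<close> both lifts equal \<open>h\<close> applied
  to it; by uniqueness they agree up to \<open>s = 1\<close>, where they are the two points.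
\<close>

section \<open>Connectedness, lifting and compactness\<close>

lemma connected_clopen_metric:
  fixes I :: "'a::metric_space set"
  assumes "connected I" "A \<subseteq> I" "a \<in> A"
    and open_A: "\<And>s. s \<in> A \<Longrightarrow> \<exists>e>0. \<forall>s'\<in>I. dist s' s < e \<longrightarrow> s' \<in> A"
    and open_compl: "\<And>s. s \<in> I \<Longrightarrow> s \<notin> A \<Longrightarrow> \<exists>e>0. \<forall>s'\<in>I. dist s' s < e \<longrightarrow> s' \<notin> A"
  shows "A = I"
proof -
  have "openin (top_of_set I) A"
    unfolding openin_euclidean_subtopology_iff using assms(2) open_A by blast
  moreover have "openin (top_of_set I) (I - A)"
    unfolding openin_euclidean_subtopology_iff using open_compl by blast
  then have "closedin (top_of_set I) A"
    using assms(2) by (simp add: closedin_def double_diff)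
  ultimately show ?thesis
    using connected_clopen[THEN iffD1, OF assms(1)] assms(3) by blast
qed

lemma connected_local_propagation:
  fixes I :: "'a::metric_space set"
  assumes "connected I" "a \<in> I" "P a"
    and local: "\<And>s. s \<in> I \<Longrightarrow> \<exists>e>0. \<forall>s1\<in>I. \<forall>s2\<in>I. dist s1 s < e \<longrightarrow> dist s2 s < e \<longrightarrow> P s1 \<longrightarrow> P s2"
    and "s \<in> I"
  shows "P s"
proof -
  have "{s\<in>I. P s} = I"
  proof (rule connected_clopen_metric[OF assms(1)])
    fix s assume s: "s \<in> {s\<in>I. P s}"
    then obtain e where "e > 0" "\<forall>s2\<in>I. dist s2 s < e \<longrightarrow> P s \<longrightarrow> P s2"
      using local[of s] by auto
    then show "\<exists>e>0. \<forall>s'\<in>I. dist s' s < e \<longrightarrow> s' \<in> {s\<in>I. P s}"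
      using s by auto
  next
    fix s assume s: "s \<in> I" "s \<notin> {s\<in>I. P s}"
    then obtain e where "e > 0" "\<forall>s1\<in>I. dist s1 s < e \<longrightarrow> P s1 \<longrightarrow> P s"
      using local[of s] by (metis dist_self)
    then show "\<exists>e>0. \<forall>s'\<in>I. dist s' s < e \<longrightarrow> s' \<notin> {s\<in>I. P s}"
      using s by auto
  qed (use assms(2,3) in auto)
  then show ?thesis using \<open>s \<in> I\<close> by blast
qed

lemma continuous_on_nbhd_in_open:
  fixes g :: "'a::metric_space \<Rightarrow> 'b::topological_space"
  assumes "continuous_on I g" "s \<in> I" "open W" "g s \<in> W"
  shows "\<exists>e>0. \<forall>s'\<in>I. dist s' s < e \<longrightarrow> g s' \<in> W"
proof -
  obtain A where "open A" "s \<in> A" "\<forall>s'\<in>I. s' \<in> A \<longrightarrow> g s' \<in> W"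
    using assms unfolding continuous_on_topological by blast
  moreover obtain e where "e > 0" "ball s e \<subseteq> A"
    using \<open>open A\<close> \<open>s \<in> A\<close> open_contains_ball by blast
  ultimately show ?thesis
    by (metis dist_commute mem_ball subsetD)
qed

lemma locally_injective_lift_unique:
  fixes f :: "'a::metric_space \<Rightarrow> 'b" and g g' :: "'c::topological_space \<Rightarrow> 'a"
  assumes loc_inj: "\<And>p. \<exists>W. open W \<and> p \<in> W \<and> inj_on f W"
    and "connected I" "continuous_on I g" "continuous_on I g'"
    and same_image: "\<And>s. s \<in> I \<Longrightarrow> f (g s) = f (g' s)"
    and "a \<in> I" "g a = g' a" "s \<in> I"
  shows "g s = g' s"
proof -
  let ?E = "{s\<in>I. g s = g' s}"
  have "closedin (top_of_set I) ?E"
    using closedin_continuous_maps_eq[of euclidean "top_of_set I" g g'] assms(3,4)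
    by (simp add: continuous_map_iff_continuous Hausdorff_space_euclidean)
  moreover have "openin (top_of_set I) ?E"
    unfolding openin_subopen[of _ ?E]
  proof
    fix s assume s: "s \<in> ?E"
    obtain W where W: "open W" "g s \<in> W" "inj_on f W" using loc_inj by blast
    define U where "U = (I \<inter> g -` W) \<inter> (I \<inter> g' -` W)"
    have "openin (top_of_set I) U"
      unfolding U_def using assms(3,4) W(1) by (intro openin_Int continuous_openin_preimage_gen)
    moreover have "U \<subseteq> ?E"
    proof
      fix s' assume "s' \<in> U"
      then have "s' \<in> I" "g s' \<in> W" "g' s' \<in> W" unfolding U_def by auto
      then show "s' \<in> ?E" using inj_onD[OF W(3) same_image] by simp
    qed
    moreover have "s \<in> U"
      using s W(2) unfolding U_def by simp
    ultimately show "\<exists>T. openin (top_of_set I) T \<and> s \<in> T \<and> T \<subseteq> ?E"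
      by blast
  qed
  moreover have "a \<in> ?E"
    using assms(6,7) by simp
  ultimately have "?E = I"
    using connected_clopen[THEN iffD1, OF assms(2), rule_format, of ?E] by blast
  then show ?thesis using assms(8) by blast
qed

lemma compact_cluster_at_right:
  fixes g :: "real \<Rightarrow> 'a::topological_space"
  assumes "compact K" "t < u" "\<And>s. s \<in> {t<..u} \<Longrightarrow> g s \<in> K"
  obtains l where "l \<in> K"
    "\<And>U \<delta>. open U \<Longrightarrow> l \<in> U \<Longrightarrow> \<delta> > 0 \<Longrightarrow> \<exists>s\<in>{t<..u}. s < t + \<delta> \<and> g s \<in> U"
proof -
  let ?F = "filtermap g (at_right t)"
  have "eventually (\<lambda>s. s \<in> {t<..u}) (at_right t)"
    using \<open>t < u\<close> by (auto simp: eventually_at_right_field)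
  then have "eventually (\<lambda>y. y \<in> K) ?F"
    unfolding eventually_filtermap by eventually_elim (use assms(3) in auto)
  moreover have "?F \<noteq> bot" by (simp add: filtermap_bot_iff)
  ultimately obtain l where l: "l \<in> K" "inf (nhds l) ?F \<noteq> bot"
    using assms(1) unfolding compact_filter by blast
  show ?thesis
  proof (rule that[OF l(1)], rule ccontr)
    fix U \<delta> assume U: "open U" "l \<in> U" "(\<delta>::real) > 0"
      and none: "\<not> (\<exists>s\<in>{t<..u}. s < t + \<delta> \<and> g s \<in> U)"
    have "eventually (\<lambda>s. s \<in> {t<..u} \<and> s < t + \<delta>) (at_right t)"
      using \<open>t < u\<close> U(3) by (auto simp: eventually_at_right_field intro!: exI[of _ "min u (t + \<delta>)"])
    then have "eventually (\<lambda>y. y \<notin> U) ?F"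
      unfolding eventually_filtermap by eventually_elim (use none in auto)
    moreover have "eventually (\<lambda>y. y \<in> U) (nhds l)"
      using U(1,2) by (rule eventually_nhds_in_open)
    ultimately have "eventually (\<lambda>_. False) (inf (nhds l) ?F)"
      unfolding eventually_inf by blast
    then show False using l(2) by (simp add: eventually_False)
  qed
qed

lemma small_factor_exists:
  fixes d r :: real
  assumes "0 < r"
  obtains s where "0 < s" "s \<le> 1" "s * d < r"
proof
  define s where "s = min 1 (r / (\<bar>d\<bar> + 1))"
  have "0 < \<bar>d\<bar> + 1" by simp
  then show "0 < s" "s \<le> 1" using assms unfolding s_def by auto
  have "s * d \<le> s * \<bar>d\<bar>"
    using \<open>0 < s\<close> by (intro mult_left_mono) auto
  also have "\<dots> \<le> r / (\<bar>d\<bar> + 1) * \<bar>d\<bar>"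
    by (intro mult_right_mono) (auto simp: s_def)
  also have "\<dots> < r" using \<open>0 < \<bar>d\<bar> + 1\<close> assms by (simp add: field_simps)
  finally show "s * d < r" .
qed

section \<open>Local diffeomorphisms\<close>

lemma invertible_matrix_inv:
  fixes A :: "'a::semiring_1^'n^'m"
  assumes "invertible A"
  shows "A ** matrix_inv A = mat 1" "matrix_inv A ** A = mat 1"
proof -
  have "A ** matrix_inv A = mat 1 \<and> matrix_inv A ** A = mat 1"
    using assms unfolding invertible_def matrix_inv_def by (rule someI_ex)
  then show "A ** matrix_inv A = mat 1" "matrix_inv A ** A = mat 1" by auto
qed

lemma matrix_inv_cancel:
  fixes A :: "'a::comm_semiring_1^'n^'m"
  assumes "invertible A"
  shows "A *v (matrix_inv A *v v) = v" "matrix_inv A *v (A *v w) = w"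
  by (simp_all add: matrix_vector_mul_assoc invertible_matrix_inv[OF assms])

lemma onorm_matrix_vector_le_norm:
  fixes A :: "real^'n^'m"
  shows "onorm ((*v) A) \<le> real CARD('m) * real CARD('n) * norm A"
  by (rule onorm_le_matrix_component)
    (rule order_trans[OF component_le_norm_cart Finite_Cartesian_Product.norm_nth_le])

lemma continuous_matrix_onorm_diff:
  fixes A :: "'a::metric_space \<Rightarrow> real^'n^'m"
  assumes "continuous_on UNIV A" "e > 0"
  shows "\<exists>d>0. \<forall>x. dist p x < d \<longrightarrow> onorm (\<lambda>v. A x *v v - A p *v v) < e"
proof -
  define K where "K = real CARD('m) * real CARD('n)"
  have K: "K > 0" unfolding K_def by simp
  obtain d where d: "d > 0" "\<And>x. dist x p < d \<Longrightarrow> dist (A x) (A p) < e / K"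
    using assms K unfolding continuous_on_eq_continuous_at[OF open_UNIV] continuous_at_eps_delta
    by (metis UNIV_I divide_pos_pos)
  have "onorm (\<lambda>v. A x *v v - A p *v v) < e" if "dist p x < d" for x
  proof -
    have "(\<lambda>v. A x *v v - A p *v v) = (*v) (A x - A p)"
      by (rule ext) (simp add: matrix_vector_mult_diff_rdistrib)
    moreover have "onorm ((*v) (A x - A p)) \<le> K * norm (A x - A p)"
      unfolding K_def by (rule onorm_matrix_vector_le_norm)
    moreover have "K * norm (A x - A p) < e"
      using d(2)[of x] that K by (simp add: dist_commute dist_norm field_simps norm_minus_commute)
    ultimately show ?thesis by simp
  qed
  then show ?thesis using d(1) by blast
qed

locale local_diffeomorphism =
  fixes f :: "real ^ 'n \<Rightarrow> real ^ 'n"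
    and f' :: "real ^ 'n \<Rightarrow> real ^ 'n ^ 'n"
  assumes has_derivative: "\<And>x. (f has_derivative (\<lambda>h. f' x *v h)) (at x)"
    and continuous_derivative: "continuous_on UNIV f'"
    and det_nonzero: "\<And>x. det (f' x) \<noteq> 0"
begin

lemma isCont: "isCont f x"
  using has_derivative by (rule has_derivative_continuous)

lemma continuous_on: "continuous_on S f"
  by (simp add: continuous_at_imp_continuous_on isCont)

lemma invertible_derivative: "invertible (f' x)"
  using det_nonzero invertible_det_nz by blast

lemma locally_injective: "\<exists>W. open W \<and> p \<in> W \<and> inj_on f W"
proof -
  have "\<exists>d>0. \<forall>x. dist p x < d \<longrightarrow> onorm (\<lambda>v. f' x *v v - f' p *v v) < e" if "e > 0" for e
    using continuous_derivative that by (rule continuous_matrix_onorm_diff)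
  moreover have "(*v) (matrix_inv (f' p)) \<circ> (*v) (f' p) = id"
    by (rule ext) (simp add: matrix_inv_cancel invertible_derivative)
  ultimately obtain r where "r > 0" "inj_on f (ball p r)"
    using has_derivative_locally_injective[of p UNIV "(*v) (matrix_inv (f' p))" "\<lambda>x. (*v) (f' x)" f]
      has_derivative by auto
  then show ?thesis by (metis centre_in_ball open_ball)
qed

lemma local_homeomorphism:
  obtains W N h where "open W" "p \<in> W" "open N" "homeomorphism W N f h"
proof -
  obtain W where W: "open W" "p \<in> W" "inj_on f W"
    using locally_injective by blast
  obtain h where "homeomorphism W (f ` W) f h"
    using invariance_of_domain_homeomorphism[OF W(1) continuous_on order_refl W(3)] by blast
  with that W(1,2) show ?thesis
    using invariance_of_domain[OF continuous_on W(1,3)] by blast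
qed

lemma local_inverse_has_derivative:
  assumes "open W" "homeomorphism W N f h" "y \<in> N"
  shows "(h has_derivative (\<lambda>v. matrix_inv (f' (h y)) *v v)) (at y)"
proof (rule has_derivative_inverse_strong_x[OF assms(1) _ continuous_on])
  show "h y \<in> W" "f (h y) = y"
    using assms(2,3) by (auto simp: homeomorphism_def)
  show "\<And>x. x \<in> W \<Longrightarrow> h (f x) = x"
    using assms(2) by (simp add: homeomorphism_def)
  show "(f has_derivative (*v) (f' (h y))) (at (h y))"
    using has_derivative by simp
  show "(*v) (f' (h y)) \<circ> (\<lambda>v. matrix_inv (f' (h y)) *v v) = id"
    by (rule ext) (simp add: matrix_inv_cancel invertible_derivative)
qed

end

section \<open>Lifting segments\<close>

lemma linepath_minus_start: "linepath a b s - a = s *\<^sub>R (b - a)"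
  by (simp add: linepath_def algebra_simps)

lemma dist_linepath_same_start: "dist (linepath a b s) (linepath a c s) = \<bar>s\<bar> * dist b c"
proof -
  have "linepath a b s - linepath a c s = s *\<^sub>R (b - c)"
    by (simp add: linepath_def algebra_simps)
  then show ?thesis by (simp add: dist_norm)
qed

lemma dist_linepath: "dist (linepath a b s) (linepath a b s') = \<bar>s - s'\<bar> * dist a b"
proof -
  have "linepath a b s - linepath a b s' = (s - s') *\<^sub>R (b - a)"
    by (simp add: linepath_def algebra_simps)
  then show ?thesis by (simp add: dist_norm norm_minus_commute)
qed

locale line_lifting = local_diffeomorphism f f' for f :: "real ^ 'n \<Rightarrow> real ^ 'n" and f' +
  fixes x0 x1 :: "real ^ 'n" and a b c :: real
  assumes nonneg: "a \<ge> 0" "b \<ge> 0" "c \<ge> 0"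
    and growth: "\<And>x. (x - x1) \<bullet> (- (matrix_inv (f' x) *v (f x - f x0)))
                 \<le> a + b * (norm (x - x1))\<^sup>2 + c * (norm (f x - f x0))\<^sup>2"
begin

definition lift_on :: "real ^ 'n \<Rightarrow> real \<Rightarrow> (real \<Rightarrow> real ^ 'n) \<Rightarrow> bool" where
  "lift_on x t g \<longleftrightarrow> continuous_on {t..1} g \<and> g 1 = x \<and> (\<forall>s\<in>{t..1}. f (g s) = linepath (f x0) (f x) s)"

lemma lift_on_mono: "lift_on x t g \<Longrightarrow> t \<le> t' \<Longrightarrow> lift_on x t' g"
  unfolding lift_on_def by (auto intro: continuous_on_subset)

lemma lift_on_const: "lift_on x 1 (\<lambda>_. x)"
  unfolding lift_on_def by (simp add: linepath_1')

lemma lift_on_has_vector_derivative: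
  assumes g: "lift_on x t g" and s: "t < s" "s < 1"
  shows "(g has_vector_derivative (matrix_inv (f' (g s)) *v (f x - f x0))) (at s)"
proof -
  obtain W N h where W: "open W" "g s \<in> W" "open N" "homeomorphism W N f h"
    using local_homeomorphism[of "g s"] by blast
  note h' = local_inverse_has_derivative[OF W(1,4)]
  have cont: "continuous_on {t..1} g" using g unfolding lift_on_def by simp
  obtain e1 where e1: "e1 > 0" "\<forall>s'\<in>{t..1}. dist s' s < e1 \<longrightarrow> g s' \<in> W"
    using continuous_on_nbhd_in_open[OF cont _ W(1,2)] s by auto
  define e where "e = min e1 (min (s - t) (1 - s))"
  have "e > 0" using e1 s unfolding e_def by simp
  have local_eq: "h (linepath (f x0) (f x) s') = g s'" if "s' \<in> ball s e" for s'
  proof -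
    have "s' \<in> {t..1}" "dist s' s < e1" using that unfolding e_def by (auto simp: dist_real_def)
    then have "g s' \<in> W" "f (g s') = linepath (f x0) (f x) s'" using e1 g unfolding lift_on_def by auto
    then show ?thesis using homeomorphism_apply1[OF W(4), of "g s'"] by simp
  qed
  have fgs: "f (g s) = linepath (f x0) (f x) s" using g s unfolding lift_on_def by auto
  then have "linepath (f x0) (f x) s \<in> N"
    using W(2) homeomorphism_image1[OF W(4)] by (metis imageI)
  moreover have "h (linepath (f x0) (f x) s) = g s"
    using fgs homeomorphism_apply1[OF W(4) W(2)] by simp
  ultimately have "((h \<circ> linepath (f x0) (f x)) has_derivative
      (\<lambda>v. matrix_inv (f' (g s)) *v v) \<circ> (\<lambda>r. r *\<^sub>R (f x - f x0))) (at s)"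
    using diff_chain_at[OF has_vector_derivative_linepath_within[of "f x0" "f x" s UNIV, unfolded has_vector_derivative_def] h']
    by simp
  then have "((h \<circ> linepath (f x0) (f x)) has_vector_derivative
      (matrix_inv (f' (g s)) *v (f x - f x0))) (at s)"
    unfolding has_vector_derivative_def by (simp add: o_def matrix_vector_mult_scaleR)
  then show ?thesis
    by (rule has_vector_derivative_transform_within_open[OF _ open_ball])
      (use \<open>e > 0\<close> local_eq in auto)
qed

lemma lift_on_inner_lower_bound:
  assumes g: "lift_on x t g" and s: "t < s" "s < 1" and \<tau>: "0 < \<tau>" "\<tau> \<le> s"
  shows "- (\<tau> * ((g s - x1) \<bullet> (matrix_inv (f' (g s)) *v (f x - f x0))))
    \<le> (b + 1) * (norm (g s - x1))\<^sup>2 + a + c * (norm (f x - f x0))\<^sup>2"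
proof -
  define P where "P = (g s - x1) \<bullet> (matrix_inv (f' (g s)) *v (f x - f x0))"
  define K where "K = (norm (f x - f x0))\<^sup>2"
  define R where "R = (norm (g s - x1))\<^sup>2"
  have fgs: "f (g s) - f x0 = s *\<^sub>R (f x - f x0)"
    using g s linepath_minus_start unfolding lift_on_def by auto
  have "- (s * P) \<le> a + b * R + c * (s\<^sup>2 * K)"
    using growth[of "g s"] unfolding P_def K_def R_def
    by (simp add: fgs matrix_vector_mult_scaleR inner_minus_right power_mult_distrib)
  also have "c * (s\<^sup>2 * K) \<le> c * K"
    unfolding K_def using s \<tau> nonneg(3)
    by (intro mult_left_mono mult_left_le_one_le) (auto simp: power_le_one)
  also have "a + b * R + c * K \<le> (b + 1) * R + a + c * K"
    unfolding R_def by (simp add: algebra_simps)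
  finally have sP: "- (s * P) \<le> (b + 1) * R + a + c * K" by simp
  have "- (\<tau> * P) \<le> (b + 1) * R + a + c * K"
  proof (cases "P \<ge> 0")
    case True
    moreover have "0 \<le> (b + 1) * R" "0 \<le> c * K"
      using nonneg unfolding R_def K_def by simp_all
    ultimately show ?thesis using \<tau> nonneg(1) by (smt (verit) mult_nonneg_nonneg)
  next
    case False
    then have "s * P \<le> \<tau> * P" using \<tau> by (simp add: mult_right_mono_neg)
    then show ?thesis using sP by simp
  qed
  then show ?thesis unfolding P_def K_def R_def .
qed

lemma lift_on_has_derivative_sq_dist:
  assumes "lift_on x t g" "t < s" "s < 1"
  shows "((\<lambda>s. (norm (g s - x1))\<^sup>2) has_real_derivative
    2 * ((g s - x1) \<bullet> (matrix_inv (f' (g s)) *v (f x - f x0)))) (at s)"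
  using lift_on_has_vector_derivative[OF assms]
  unfolding power2_norm_eq_inner has_vector_derivative_def has_field_derivative_def
  by (auto intro!: derivative_eq_intros simp: inner_commute algebra_simps)

lemma lift_on_bound:
  assumes g: "lift_on x t g" and \<tau>: "0 < \<tau>" "\<tau> \<le> t" and \<sigma>: "\<sigma> \<in> {t..1}"
  shows "(norm (g \<sigma> - x1))\<^sup>2 \<le>
    ((norm (x - x1))\<^sup>2 + (a + c * (norm (f x - f x0))\<^sup>2) / (b + 1)) * exp (2 * (b + 1) / \<tau>)"
proof -
  define D where "D = (a + c * (norm (f x - f x0))\<^sup>2) / (b + 1)"
  define L where "L = 2 * (b + 1) / \<tau>"
  define r where "r s = (norm (g s - x1))\<^sup>2" for s
  \<comment> \<open>Gronwall: the growth hypothesis makes \<open>\<phi>\<close> nondecreasing.\<close>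
  define \<phi> where "\<phi> s = (r s + D) * exp (L * s)" for s
  have D: "D \<ge> 0" and L: "L > 0"
    using nonneg \<tau> unfolding D_def L_def by auto
  have cont: "continuous_on {\<sigma>..1} \<phi>"
    using g \<sigma> unfolding \<phi>_def r_def lift_on_def
    by (auto intro!: continuous_intros intro: continuous_on_subset)
  have "\<exists>y. (\<phi> has_real_derivative y) (at s) \<and> y \<ge> 0" if s: "\<sigma> < s" "s < 1" for s
  proof -
    define d where "d = matrix_inv (f' (g s)) *v (f x - f x0)"
    have "(r has_real_derivative 2 * ((g s - x1) \<bullet> d)) (at s)"
      unfolding r_def d_def using lift_on_has_derivative_sq_dist[OF g _ s(2)] s \<sigma> by simp
    then have "(\<phi> has_real_derivative (2 * ((g s - x1) \<bullet> d) + L * (r s + D)) * exp (L * s)) (at s)"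
      unfolding \<phi>_def by (auto intro!: derivative_eq_intros simp: algebra_simps)
    moreover have "0 \<le> 2 * ((g s - x1) \<bullet> d) + L * (r s + D)"
    proof -
      define P where "P = (g s - x1) \<bullet> d"
      have "- (\<tau> * P) \<le> (b + 1) * r s + a + c * (norm (f x - f x0))\<^sup>2"
        using lift_on_inner_lower_bound[OF g _ s(2) \<tau>(1)] s \<sigma> \<tau>
        unfolding P_def d_def r_def by simp
      moreover have "(b + 1) * D = a + c * (norm (f x - f x0))\<^sup>2"
        using nonneg unfolding D_def by simp
      ultimately have "- (\<tau> * P) \<le> (b + 1) * (r s + D)"
        by (simp add: algebra_simps)
      then have "0 \<le> 2 * P + L * (r s + D)"
        using \<tau> unfolding L_def by (simp add: field_simps)
      then show ?thesis unfolding P_def .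
    qed
    ultimately show ?thesis by auto
  qed
  then have "\<phi> \<sigma> \<le> \<phi> 1"
    using DERIV_nonneg_imp_increasing_open[OF _ _ cont] \<sigma> by fastforce
  moreover have "r \<sigma> \<le> \<phi> \<sigma>"
  proof -
    have "(r \<sigma> + D) * 1 \<le> (r \<sigma> + D) * exp (L * \<sigma>)"
      using L \<sigma> \<tau> D unfolding r_def by (intro mult_left_mono) auto
    then show ?thesis unfolding \<phi>_def using D by simp
  qed
  moreover have "r 1 = (norm (x - x1))\<^sup>2"
    using g unfolding r_def lift_on_def by simp
  ultimately show ?thesis unfolding \<phi>_def r_def D_def L_def by simp
qed

lemma lift_on_extend:
  assumes g: "lift_on x s g" and "t \<le> s" "s \<le> 1"
    and H: "homeomorphism W N f h" and "g s \<in> W"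
    and N: "\<And>\<sigma>. \<sigma> \<in> {t..s} \<Longrightarrow> linepath (f x0) (f x) \<sigma> \<in> N"
  shows "lift_on x t (\<lambda>\<sigma>. if \<sigma> \<le> s then h (linepath (f x0) (f x) \<sigma>) else g \<sigma>)"
proof -
  have "f (g s) = linepath (f x0) (f x) s"
    using g assms(2,3) unfolding lift_on_def by auto
  then have hs: "h (linepath (f x0) (f x) s) = g s"
    using homeomorphism_apply1[OF H \<open>g s \<in> W\<close>] by simp
  have "continuous_on {\<sigma>\<in>{t..1}. \<sigma> \<le> s} (\<lambda>\<sigma>. h (linepath (f x0) (f x) \<sigma>))"
    using N by (intro continuous_on_compose2[OF homeomorphism_cont2[OF H] continuous_on_linepath]) auto
  moreover have "continuous_on {\<sigma>\<in>{t..1}. s \<le> \<sigma>} g"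
    using g unfolding lift_on_def by (auto intro: continuous_on_subset)
  ultimately have "continuous_on {t..1} (\<lambda>\<sigma>. if \<sigma> \<le> s then h (linepath (f x0) (f x) \<sigma>) else g \<sigma>)"
    by (rule continuous_on_cases_le[OF _ _ continuous_on_id]) (use hs in auto)
  moreover have "f (h (linepath (f x0) (f x) \<sigma>)) = linepath (f x0) (f x) \<sigma>" if "\<sigma> \<in> {t..s}" for \<sigma>
    using homeomorphism_apply2[OF H N[OF that]] .
  ultimately show ?thesis
    using g hs assms(3) unfolding lift_on_def by auto
qed

lemma lift_on_extend_below:
  assumes g: "lift_on x t g" and t: "0 < t" "t \<le> 1"
  shows "\<exists>e>0. \<forall>s\<in>{0<..1}. dist s t < e \<longrightarrow> (\<exists>g'. lift_on x s g')"
proof -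
  obtain W N h where W: "open W" "g t \<in> W" "open N" "homeomorphism W N f h"
    using local_homeomorphism[of "g t"] by blast
  have "f (g t) = linepath (f x0) (f x) t"
    using g t unfolding lift_on_def by auto
  then have "linepath (f x0) (f x) t \<in> N"
    using W(2) homeomorphism_image1[OF W(4)] by (metis imageI)
  then obtain e where e: "e > 0" "\<forall>s\<in>UNIV. dist s t < e \<longrightarrow> linepath (f x0) (f x) s \<in> N"
    using continuous_on_nbhd_in_open[OF continuous_on_linepath UNIV_I W(3)] by blast
  have "\<exists>g'. lift_on x s g'" if "s \<in> {0<..1}" "dist s t < e" for s
  proof (cases "t \<le> s")
    case True
    then show ?thesis using lift_on_mono[OF g] by blast
  next
    case False
    have "linepath (f x0) (f x) \<sigma> \<in> N" if "\<sigma> \<in> {s..t}" for \<sigma>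
      using e(2) that \<open>dist s t < e\<close> by (auto simp: dist_real_def)
    then have "lift_on x s (\<lambda>\<sigma>. if \<sigma> \<le> t then h (linepath (f x0) (f x) \<sigma>) else g \<sigma>)"
      using False by (intro lift_on_extend[OF g _ t(2) W(4) W(2)]) auto
    then show ?thesis by blast
  qed
  then show ?thesis using e(1) by blast
qed

lemma lift_on_extend_to_limit:
  assumes t: "0 < t" "t < 1" and lifts: "\<And>s. s \<in> {t<..1} \<Longrightarrow> \<exists>g. lift_on x s g"
  shows "\<exists>g. lift_on x t g"
proof -
  define G where "G s = (SOME g. lift_on x s g)" for s
  have G: "lift_on x s (G s)" if "s \<in> {t<..1}" for s
    unfolding G_def using lifts[OF that] by (rule someI_ex)
  define B where "B = ((norm (x - x1))\<^sup>2 + (a + c * (norm (f x - f x0))\<^sup>2) / (b + 1)) * exp (2 * (b + 1) / t)"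
  have bounded: "G s s \<in> cball x1 (sqrt B)" if s: "s \<in> {t<..1}" for s
  proof -
    have "(norm (G s s - x1))\<^sup>2 \<le> B"
      unfolding B_def using lift_on_bound[OF G[OF s] t(1)] s by simp
    then show ?thesis
      by (simp add: dist_norm norm_minus_commute real_le_rsqrt)
  qed
  obtain l where "l \<in> cball x1 (sqrt B)" and
    l: "\<And>U \<delta>. open U \<Longrightarrow> l \<in> U \<Longrightarrow> \<delta> > 0 \<Longrightarrow> \<exists>s\<in>{t<..1}. s < t + \<delta> \<and> G s s \<in> U"
    using compact_cluster_at_right[of "cball x1 (sqrt B)" t 1 "\<lambda>s. G s s",
        OF compact_cball \<open>t < 1\<close> bounded] by auto
  obtain W N h where W: "open W" "l \<in> W" "open N" "homeomorphism W N f h"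
    using local_homeomorphism[of l] by blast
  have "f l \<in> N"
    using W(2) homeomorphism_image1[OF W(4)] by (metis imageI)
  then obtain \<rho> where \<rho>: "\<rho> > 0" "ball (f l) \<rho> \<subseteq> N"
    using W(3) open_contains_ball by blast
  define U where "U = W \<inter> f -` ball (f l) (\<rho> / 2)"
  have "open U"
    unfolding U_def using W(1) isCont by (intro open_Int continuous_open_vimage) auto
  moreover have "l \<in> U" unfolding U_def using W(2) \<rho>(1) by simp
  moreover obtain \<delta> where "\<delta> > 0" and \<delta>: "\<delta> * dist (f x0) (f x) < \<rho> / 2"
    using small_factor_exists[of "\<rho> / 2"] \<rho>(1) by auto
  ultimately obtain s where s: "s \<in> {t<..1}" "s < t + \<delta>" "G s s \<in> U"
    using l by blast
  have "linepath (f x0) (f x) \<sigma> \<in> N" if \<sigma>: "\<sigma> \<in> {t..s}" for \<sigma>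
  proof -
    have "dist (linepath (f x0) (f x) \<sigma>) (linepath (f x0) (f x) s) = (s - \<sigma>) * dist (f x0) (f x)"
      using \<sigma> by (simp add: dist_linepath)
    also have "\<dots> \<le> \<delta> * dist (f x0) (f x)"
      using \<sigma> s(2) by (intro mult_right_mono) auto
    finally have "dist (linepath (f x0) (f x) \<sigma>) (f (G s s)) < \<rho> / 2"
      using \<delta> G[OF s(1)] s(1) unfolding lift_on_def by auto
    moreover have "dist (f (G s s)) (f l) < \<rho> / 2"
      using s(3) unfolding U_def by (simp add: dist_commute)
    ultimately have "dist (f l) (linepath (f x0) (f x) \<sigma>) < \<rho>"
      using dist_triangle_half_r by (metis dist_commute)
    then show ?thesis using \<rho>(2) by auto
  qed
  moreover have "G s s \<in> W" using s(3) unfolding U_def by simp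
  ultimately have "lift_on x t (\<lambda>\<sigma>. if \<sigma> \<le> s then h (linepath (f x0) (f x) \<sigma>) else G s \<sigma>)"
    using s(1) by (intro lift_on_extend[OF G[OF s(1)] _ _ W(4)]) auto
  then show ?thesis by blast
qed

lemma lift_on_exists:
  assumes "t \<in> {0<..1}"
  shows "\<exists>g. lift_on x t g"
proof -
  define T where "T = {t\<in>{0<..1}. \<exists>g. lift_on x t g}"
  have "T = {0<..1}"
  proof (rule connected_clopen_metric[OF connected_Ioc])
    show "T \<subseteq> {0<..1}" "1 \<in> T"
      unfolding T_def using lift_on_const by auto
  next
    fix t assume "t \<in> T"
    then obtain g where "lift_on x t g" "0 < t" "t \<le> 1"
      unfolding T_def by auto
    then have "\<exists>e>0. \<forall>s\<in>{0<..1}. dist s t < e \<longrightarrow> (\<exists>g'. lift_on x s g')"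
      by (rule lift_on_extend_below)
    then show "\<exists>e>0. \<forall>s\<in>{0<..1}. dist s t < e \<longrightarrow> s \<in> T"
      unfolding T_def by simp
  next
    fix t assume t: "t \<in> {0<..1}" "t \<notin> T"
    show "\<exists>e>0. \<forall>s\<in>{0<..1}. dist s t < e \<longrightarrow> s \<notin> T"
    proof (rule ccontr)
      assume near: "\<not> ?thesis"
      have "\<exists>g. lift_on x s g" if s: "s \<in> {t<..1}" for s
      proof -
        have "s - t > 0" using s by simp
        with near obtain s' where s': "s' \<in> T" "dist s' t < s - t"
          by blast
        then obtain g where g: "lift_on x s' g" unfolding T_def by auto
        have "t < s'"
        proof (rule ccontr)
          assume "\<not> t < s'"
          then have "lift_on x t g" using lift_on_mono[OF g] by simp
          then show False using t unfolding T_def by auto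
        qed
        then have "s' \<le> s" using s'(2) by (simp add: dist_real_def)
        then show ?thesis using lift_on_mono[OF g] by blast
      qed
      moreover have "t \<noteq> 1"
        using t lift_on_const unfolding T_def by auto
      ultimately obtain g where "lift_on x t g"
        using lift_on_extend_to_limit t(1) by fastforce
      then show False using t unfolding T_def by auto
    qed
  qed
  then show ?thesis using assms unfolding T_def by auto
qed

lemma lift_on_agree:
  assumes g1: "lift_on x t g1" and g2: "lift_on x t' g2" and "max t t' \<le> \<sigma>" "\<sigma> \<le> 1"
  shows "g1 \<sigma> = g2 \<sigma>"
proof (rule locally_injective_lift_unique[OF locally_injective,
    where I = "{max t t'..1}" and g = g1 and g' = g2 and a = 1 and s = \<sigma>])
  show "connected {max t t'..1::real}" by simp
  have "{max t t'..1} \<subseteq> {t..1}" "{max t t'..1} \<subseteq> {t'..1}" by auto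
  then show "continuous_on {max t t'..1} g1" "continuous_on {max t t'..1} g2"
    using g1 g2 unfolding lift_on_def by (meson continuous_on_subset)+
  show "f (g1 s) = f (g2 s)" if "s \<in> {max t t'..1}" for s
    using g1 g2 that unfolding lift_on_def by simp
  show "1 \<in> {max t t'..1::real}" "\<sigma> \<in> {max t t'..1}"
    using assms(3,4) by auto
  show "g1 1 = g2 1"
    using g1 g2 unfolding lift_on_def by simp
qed

text \<open>Outside \<open>(0, 1]\<close> the value of \<open>lift\<close> is unspecified.\<close>

definition lift :: "real ^ 'n \<Rightarrow> real \<Rightarrow> real ^ 'n" where
  "lift x s = (SOME g. lift_on x s g) s"

lemma lift_eq:
  assumes "lift_on x t g" "0 < t" "\<sigma> \<in> {t..1}"
  shows "lift x \<sigma> = g \<sigma>"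
proof -
  have "lift_on x \<sigma> (SOME g. lift_on x \<sigma> g)"
    using lift_on_exists[of \<sigma> x] assms(2,3) by (simp add: someI_ex)
  then show ?thesis
    unfolding lift_def by (rule lift_on_agree[OF _ assms(1)]) (use assms(3) in auto)
qed

lemma lift_one: "lift x 1 = x"
  using lift_eq[OF lift_on_const] by simp

lemma f_lift:
  assumes "s \<in> {0<..1}"
  shows "f (lift x s) = linepath (f x0) (f x) s"
proof -
  obtain g where g: "lift_on x s g" using lift_on_exists[OF assms] by blast
  then have "lift x s = g s" using assms by (intro lift_eq) auto
  then show ?thesis using g assms unfolding lift_on_def by simp
qed

lemma continuous_on_lift: "continuous_on {0<..1} (lift x)"
proof (rule continuous_on_eq_continuous_within[THEN iffD2, rule_format])
  fix \<sigma> :: real assume \<sigma>: "\<sigma> \<in> {0<..1}"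
  then obtain g where g: "lift_on x (\<sigma> / 2) g"
    using lift_on_exists[of "\<sigma> / 2" x] by auto
  have "at \<sigma> within {0<..1} = at \<sigma> within {\<sigma> / 2..1}"
    using \<sigma> by (intro at_within_nhd[of _ "{\<sigma> / 2<..}"]) auto
  moreover have "continuous (at \<sigma> within {\<sigma> / 2..1}) g"
    using g \<sigma> unfolding lift_on_def continuous_on_eq_continuous_within by auto
  then have "continuous (at \<sigma> within {\<sigma> / 2..1}) (lift x)"
  proof (rule continuous_transform_within[of _ _ _ 1])
    show "g \<sigma>' = lift x \<sigma>'" if "\<sigma>' \<in> {\<sigma> / 2..1}" for \<sigma>'
      using lift_eq[OF g _ that] \<sigma> by simp
  qed (use \<sigma> in auto)
  ultimately show "continuous (at \<sigma> within {0<..1}) (lift x)" by simp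
qed

lemma lift_eq_local_inverse:
  assumes H: "homeomorphism W N f h" and I: "connected I" "I \<subseteq> {0<..1}"
    and s: "s \<in> I" "lift x s \<in> W"
    and N: "\<And>\<sigma>. \<sigma> \<in> I \<Longrightarrow> linepath (f x0) (f x) \<sigma> \<in> N" and "\<sigma> \<in> I"
  shows "lift x \<sigma> = h (linepath (f x0) (f x) \<sigma>)"
proof (rule locally_injective_lift_unique[OF locally_injective I(1),
    where g = "lift x" and g' = "\<lambda>\<sigma>. h (linepath (f x0) (f x) \<sigma>)" and a = s and s = \<sigma>])
  show "continuous_on I (lift x)"
    using continuous_on_lift I(2) by (rule continuous_on_subset)
  show "continuous_on I (\<lambda>\<sigma>. h (linepath (f x0) (f x) \<sigma>))"
    using N by (intro continuous_on_compose2[OF homeomorphism_cont2[OF H] continuous_on_linepath]) auto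
  show "f (lift x \<sigma>) = f (h (linepath (f x0) (f x) \<sigma>))" if "\<sigma> \<in> I" for \<sigma>
    using f_lift[of \<sigma> x] homeomorphism_apply2[OF H N[OF that]] that I(2) by auto
  show "lift x s = h (linepath (f x0) (f x) s)"
    using homeomorphism_apply1[OF H s(2)] f_lift[of s x] s(1) I(2) by auto
qed (use s(1) \<open>\<sigma> \<in> I\<close> in auto)

lemma isCont_local_inverse_linepath:
  assumes "homeomorphism W N f h" "open N" "linepath (f x0) (f x) s \<in> N"
  shows "isCont (\<lambda>y. h (linepath (f x0) (f y) s)) x"
proof (rule continuous_at_compose[unfolded o_def, where f = "\<lambda>y. linepath (f x0) (f y) s"])
  show "isCont (\<lambda>y. linepath (f x0) (f y) s) x"
    unfolding linepath_def using isCont by (intro continuous_intros)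
  show "isCont h (linepath (f x0) (f x) s)"
    using assms homeomorphism_cont2[OF assms(1)] continuous_on_eq_continuous_at by blast
qed

lemma isCont_lift_transfer:
  assumes H: "open W" "homeomorphism W N f h" "open N"
    and I: "{min s1 s2..max s1 s2} \<subseteq> {0<..1}" and "\<rho> > 0"
    and N: "\<And>\<sigma>. \<sigma> \<in> {min s1 s2..max s1 s2} \<Longrightarrow> ball (linepath (f x0) (f x) \<sigma>) \<rho> \<subseteq> N"
    and "lift x s1 \<in> W" and cont1: "isCont (\<lambda>y. lift y s1) x"
  shows "isCont (\<lambda>y. lift y s2) x"
proof -
  let ?I = "{min s1 s2..max s1 s2}"
  have "((\<lambda>y. lift y s1) \<longlongrightarrow> lift x s1) (nhds x)"
    using cont1 tendsto_at_iff_tendsto_nhds[of "\<lambda>y. lift y s1" x] by (simp add: isCont_def)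
  then have "eventually (\<lambda>y. lift y s1 \<in> W) (nhds x)"
    using H(1) \<open>lift x s1 \<in> W\<close> by (rule topological_tendstoD)
  moreover have "(f \<longlongrightarrow> f x) (nhds x)"
    using isCont[of x] by (simp add: isCont_def tendsto_at_iff_tendsto_nhds)
  then have "eventually (\<lambda>y. dist (f y) (f x) < \<rho>) (nhds x)"
    using \<open>\<rho> > 0\<close> by (intro tendstoD) auto
  ultimately have "eventually (\<lambda>y. lift y s2 = h (linepath (f x0) (f y) s2)) (nhds x)"
  proof eventually_elim
    case (elim y)
    have N_y: "linepath (f x0) (f y) \<sigma> \<in> N" if "\<sigma> \<in> ?I" for \<sigma>
    proof -
      have "dist (linepath (f x0) (f y) \<sigma>) (linepath (f x0) (f x) \<sigma>) \<le> dist (f y) (f x)"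
        using I that by (auto simp: dist_linepath_same_start intro!: mult_left_le_one_le)
      then show ?thesis using N[OF that] elim(2) by (auto simp: dist_commute)
    qed
    show ?case
      by (rule lift_eq_local_inverse[OF H(2) connected_Icc I _ elim(1) N_y]) auto
  qed
  moreover have "isCont (\<lambda>y. h (linepath (f x0) (f y) s2)) x"
    using N[of s2] \<open>\<rho> > 0\<close> by (intro isCont_local_inverse_linepath[OF H(2,3)]) auto
  ultimately show ?thesis
    using isCont_cong[of "\<lambda>y. lift y s2" "\<lambda>y. h (linepath (f x0) (f y) s2)"] by simp
qed

lemma isCont_lift_propagation:
  assumes s: "s \<in> {0<..1}"
  shows "\<exists>\<eta>>0. \<forall>s1\<in>{0<..1}. \<forall>s2\<in>{0<..1}. dist s1 s < \<eta> \<longrightarrow> dist s2 s < \<eta> \<longrightarrow>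
    isCont (\<lambda>y. lift y s1) x \<longrightarrow> isCont (\<lambda>y. lift y s2) x"
proof -
  obtain W N h where W: "open W" "lift x s \<in> W" "open N" "homeomorphism W N f h"
    using local_homeomorphism by blast
  have "linepath (f x0) (f x) s \<in> N"
    using f_lift[OF s] W(2) homeomorphism_image1[OF W(4)] by (metis imageI)
  then obtain \<rho> where \<rho>: "\<rho> > 0" "ball (linepath (f x0) (f x) s) \<rho> \<subseteq> N"
    using W(3) open_contains_ball by blast
  obtain \<eta>1 where \<eta>1: "\<eta>1 > 0" "\<forall>s'\<in>{0<..1}. dist s' s < \<eta>1 \<longrightarrow> lift x s' \<in> W"
    using continuous_on_nbhd_in_open[OF continuous_on_lift s W(1,2)] by blast
  have "\<exists>e>0. \<forall>s'\<in>UNIV. dist s' s < e \<longrightarrow>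
      linepath (f x0) (f x) s' \<in> ball (linepath (f x0) (f x) s) (\<rho> / 2)"
    by (rule continuous_on_nbhd_in_open) (use \<rho>(1) in auto)
  then obtain \<eta>2 where \<eta>2: "\<eta>2 > 0"
    "\<forall>s'\<in>UNIV. dist s' s < \<eta>2 \<longrightarrow> linepath (f x0) (f x) s' \<in> ball (linepath (f x0) (f x) s) (\<rho> / 2)"
    by blast
  have "isCont (\<lambda>y. lift y s2) x"
    if s12: "s1 \<in> {0<..1}" "s2 \<in> {0<..1}" "dist s1 s < min \<eta>1 \<eta>2" "dist s2 s < min \<eta>1 \<eta>2"
      and "isCont (\<lambda>y. lift y s1) x" for s1 s2
  proof (rule isCont_lift_transfer[OF W(1,4,3) _ half_gt_zero[OF \<rho>(1)]])
    show "{min s1 s2..max s1 s2} \<subseteq> {0<..1}"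
      using s12(1,2) by auto
    show "ball (linepath (f x0) (f x) \<sigma>) (\<rho> / 2) \<subseteq> N" if "\<sigma> \<in> {min s1 s2..max s1 s2}" for \<sigma>
    proof -
      have "dist \<sigma> s < \<eta>2"
        using that s12(3,4) by (auto simp: dist_real_def abs_less_iff)
      then have "dist (linepath (f x0) (f x) s) (linepath (f x0) (f x) \<sigma>) < \<rho> / 2"
        using \<eta>2(2) by simp
      then show ?thesis
        using \<rho>(2) dist_triangle_half_l[of "linepath (f x0) (f x) s" "linepath (f x0) (f x) \<sigma>" \<rho>]
        by (auto simp: dist_commute)
    qed
    show "lift x s1 \<in> W" using \<eta>1(2) s12(1,3) by simp
  qed fact
  moreover have "min \<eta>1 \<eta>2 > 0" using \<eta>1(1) \<eta>2(1) by simp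
  ultimately show ?thesis by blast
qed

lemma isCont_lift:
  assumes "s \<in> {0<..1}"
  shows "isCont (\<lambda>y. lift y s) x"
proof (rule connected_local_propagation[OF connected_Ioc,
    where P = "\<lambda>s. isCont (\<lambda>y. lift y s) x" and a = 1])
  show "isCont (\<lambda>y. lift y 1) x" by (simp add: lift_one)
  show "\<exists>e>0. \<forall>s1\<in>{0<..1}. \<forall>s2\<in>{0<..1}. dist s1 s < e \<longrightarrow> dist s2 s < e \<longrightarrow>
      isCont (\<lambda>y. lift y s1) x \<longrightarrow> isCont (\<lambda>y. lift y s2) x" if "s \<in> {0<..1}" for s
    using that by (rule isCont_lift_propagation)
qed (use assms in auto)

section \<open>The basin of \<open>x0\<close>\<close>

definition basin :: "(real ^ 'n) set \<Rightarrow> real \<Rightarrow> (real ^ 'n) set" where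
  "basin W r = (\<Union>s\<in>{0<..1}. {y. s * dist (f x0) (f y) < r} \<inter> (\<lambda>y. lift y s) -` W)"

lemma lift_eq_local_inverse_near_start:
  assumes H: "homeomorphism W N f h" and r: "ball (f x0) r \<subseteq> N"
    and m: "0 < m" "m \<le> 1" "m * dist (f x0) (f y) < r"
    and s: "s \<in> {0<..m}" "lift y s \<in> W" and \<sigma>: "\<sigma> \<in> {0<..m}"
  shows "lift y \<sigma> = h (linepath (f x0) (f y) \<sigma>)"
proof (rule lift_eq_local_inverse[OF H _ _ s _ \<sigma>])
  show "connected {0<..m}" by simp
  show "{0<..m} \<subseteq> {0<..1}" using m by auto
  show "linepath (f x0) (f y) \<tau> \<in> N" if "\<tau> \<in> {0<..m}" for \<tau>
  proof -
    have "dist (f x0) (linepath (f x0) (f y) \<tau>) = \<tau> * dist (f x0) (f y)"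
      using dist_linepath[of "f x0" "f y" 0 \<tau>] that by (simp add: linepath_0')
    also have "\<dots> \<le> m * dist (f x0) (f y)"
      using that by (intro mult_right_mono) auto
    finally show ?thesis using m(3) r by auto
  qed
qed

lemma inj_on_basin:
  assumes H: "homeomorphism W N f h" and r: "ball (f x0) r \<subseteq> N"
  shows "inj_on f (basin W r)"
proof (rule inj_onI)
  fix x y assume "x \<in> basin W r" "y \<in> basin W r" and fxy: "f x = f y"
  then obtain sx sy where
    sx: "sx \<in> {0<..1}" "sx * dist (f x0) (f x) < r" "lift x sx \<in> W" and
    sy: "sy \<in> {0<..1}" "sy * dist (f x0) (f y) < r" "lift y sy \<in> W"
    unfolding basin_def by auto
  define m where "m = min sx sy"
  have "lift x m = h (linepath (f x0) (f x) m)"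
    by (rule lift_eq_local_inverse_near_start[OF H r _ _ sx(2) _ sx(3)]) (use sx sy m_def in auto)
  moreover have "lift y m = h (linepath (f x0) (f y) m)"
    by (rule lift_eq_local_inverse_near_start[OF H r _ _ sy(2) _ sy(3)]) (use sx sy m_def in auto)
  ultimately have "lift x m = lift y m" using fxy by simp
  have "lift x 1 = lift y 1"
  proof (rule locally_injective_lift_unique[OF locally_injective connected_Ioc
        continuous_on_lift continuous_on_lift, where a = m])
    show "f (lift x s) = f (lift y s)" if "s \<in> {0<..1}" for s
      using f_lift[OF that] fxy by simp
    show "lift x m = lift y m" by fact
  qed (use sx sy m_def in auto)
  then show "x = y" by (simp add: lift_one)
qed

lemma basin_lift_eq:
  assumes H: "homeomorphism W N f h" and r: "ball (f x0) r \<subseteq> N"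
    and "y \<in> basin W r" and s: "s \<in> {0<..1}" "s * dist (f x0) (f y) < r"
  shows "lift y s = h (linepath (f x0) (f y) s)"
proof -
  obtain s' where s': "s' \<in> {0<..1}" "s' * dist (f x0) (f y) < r" "lift y s' \<in> W"
    using \<open>y \<in> basin W r\<close> unfolding basin_def by blast
  have "max s s' * dist (f x0) (f y) < r"
    using s(2) s'(2) by (simp add: max_def)
  moreover have "0 < max s s'" "max s s' \<le> 1" "s' \<in> {0<..max s s'}" "s \<in> {0<..max s s'}"
    using s(1) s'(1) by auto
  ultimately show ?thesis
    using lift_eq_local_inverse_near_start[OF H r] s'(3) by blast
qed

lemma open_basin:
  assumes "open W"
  shows "open (basin W r)"
  unfolding basin_def
proof (intro open_UN ballI open_Int)
  fix s :: real assume "s \<in> {0<..1}"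
  show "open {y. s * dist (f x0) (f y) < r}"
    using isCont by (intro open_Collect_less continuous_at_imp_continuous_on ballI continuous_intros) auto
  show "open ((\<lambda>y. lift y s) -` W)"
    using assms isCont_lift[OF \<open>s \<in> {0<..1}\<close>] by (intro continuous_open_vimage)
qed

lemma closed_basin:
  assumes H: "homeomorphism W N f h" "open N" and r: "0 < r" "ball (f x0) r \<subseteq> N"
  shows "closed (basin W r)"
  unfolding closed_limpt
proof (intro allI impI)
  fix x assume "x islimpt basin W r"
  then have F: "at x within basin W r \<noteq> bot"
    by (simp add: trivial_limit_within)
  have within: "(g \<longlongrightarrow> g x) (at x within basin W r)" if "isCont g x" for g :: "real ^ 'n \<Rightarrow> real ^ 'n"
    using that unfolding isCont_def by (rule tendsto_mono[OF at_le[OF subset_UNIV]])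
  obtain s where s: "0 < s" "s \<le> 1" and sd: "s * dist (f x0) (f x) < r / 2"
    using small_factor_exists[of "r / 2"] r(1) by auto
  have "eventually (\<lambda>y. dist (f y) (f x) < r / 2) (at x within basin W r)"
    using within[OF isCont] r(1) by (intro tendstoD) auto
  moreover have "eventually (\<lambda>y. y \<in> basin W r) (at x within basin W r)"
    by (simp add: eventually_at_filter)
  ultimately have E: "eventually (\<lambda>y. lift y s = h (linepath (f x0) (f y) s)) (at x within basin W r)"
  proof eventually_elim
    case (elim y)
    have "s * dist (f x0) (f y) \<le> s * (dist (f x0) (f x) + dist (f y) (f x))"
      using s(1) dist_triangle[of "f x0" "f y" "f x"] by (simp add: dist_commute)
    also have "\<dots> \<le> s * dist (f x0) (f x) + dist (f y) (f x)"
      using s(1,2) by (simp add: distrib_left mult_left_le_one_le)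
    finally have "s * dist (f x0) (f y) < r" using sd elim(1) by linarith
    then show ?case
      using basin_lift_eq[OF H(1) r(2) elim(2)] s by simp
  qed
  have "dist (f x0) (linepath (f x0) (f x) s) = s * dist (f x0) (f x)"
    using dist_linepath[of "f x0" "f x" 0 s] s by (simp add: linepath_0')
  then have "linepath (f x0) (f x) s \<in> ball (f x0) r"
    using sd r(1) by simp
  then have lx: "linepath (f x0) (f x) s \<in> N"
    using r(2) by blast
  have "((\<lambda>y. lift y s) \<longlongrightarrow> lift x s) (at x within basin W r)"
    using within[OF isCont_lift] s by simp
  then have "((\<lambda>y. h (linepath (f x0) (f y) s)) \<longlongrightarrow> lift x s) (at x within basin W r)"
    using E by (rule Lim_transform_eventually)
  moreover have "((\<lambda>y. h (linepath (f x0) (f y) s)) \<longlongrightarrow> h (linepath (f x0) (f x) s)) (at x within basin W r)"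
    using within[OF isCont_local_inverse_linepath[OF H lx]] by simp
  ultimately have "lift x s = h (linepath (f x0) (f x) s)"
    using F tendsto_unique by blast
  then have "lift x s \<in> W"
    using lx homeomorphism_image2[OF H(1)] by blast
  then show "x \<in> basin W r"
    unfolding basin_def using s sd r(1) by (intro UN_I[of s]) auto
qed

theorem inj_f: "inj f"
proof -
  obtain W N h where W: "open W" "x0 \<in> W" "open N" "homeomorphism W N f h"
    using local_homeomorphism by blast
  have "f x0 \<in> N"
    using W(2) homeomorphism_image1[OF W(4)] by blast
  then obtain r where r: "0 < r" "ball (f x0) r \<subseteq> N"
    using W(3) open_contains_ball by blast
  have "x0 \<in> basin W r"
    unfolding basin_def using W(2) r(1) by (auto simp: lift_one intro!: bexI[of _ 1])
  then have "basin W r = UNIV"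
    using clopen[of "basin W r"] open_basin[OF W(1)] closed_basin[OF W(4,3) r] by blast
  then show ?thesis
    using inj_on_basin[OF W(4) r(2)] by simp
qed

end

theorem corollary4p2:
  fixes f :: "real ^ 'n \<Rightarrow> real ^ 'n"
    and f' :: "real ^ 'n \<Rightarrow> real ^ 'n ^ 'n"
    and x0 x1 :: "real ^ 'n"
    and a b c :: real
  assumes deriv: "\<And>x. (f has_derivative (\<lambda>h. f' x *v h)) (at x)"
    and C1: "continuous_on UNIV f'"
    and det_nz: "\<And>x. det (f' x) \<noteq> 0"
    and abc: "a \<ge> 0" "b \<ge> 0" "c \<ge> 0"
    and ineq: "\<And>x. (x - x1) \<bullet> (- (matrix_inv (f' x) *v (f x - f x0)))
                 \<le> a + b * (norm (x - x1))\<^sup>2 + c * (norm (f x - f x0))\<^sup>2"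
  shows "inj f"
proof -
  interpret line_lifting f f' x0 x1 a b c
    using deriv C1 det_nz abc ineq by unfold_locales
  show ?thesis by (rule inj_f)
qed

end
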